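(* Proper interval graphs $\subsetneq$ exactly hittable interval graphs $\subsetneq$ interval graphs (both containments are strict).
   Context: An interval graph is the intersection graph of a finite family of intervals on a line. A proper interval graph is an interval graph having an interval representation in which no interval properly contains another. An interval hypergraph has vertex set $[n]$ and hyperedges that are nonempty sets of consecutive integers; it is exactly hittable if there is a set $T$ of points with $|T\cap I|=1$ for every hyperedge $I$. An exactly hittable interval graph is an interval graph that is the intersection graph of an exactly hittable interval hypergraph. *)

theory Defs
  imports Complex_Main
begin

definition simple_graph :: "'a set \<Rightarrow> 'a set set \<Rightarrow> bool" where
  "simple_graph V E \<longleftrightarrow> finite V \<and>
     (\<forall>e\<in>E. \<exists>u v. u \<in> V \<and> v \<in> V \<and> u \<noteq> v \<and> e = {u, v})"

definition is_intersection_graph :: "'a set \<Rightarrow> 'a set set \<Rightarrow> ('a \<Rightarrow> 'b set) \<Rightarrow> bool" where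
  "is_intersection_graph V E I \<longleftrightarrow>
     (\<forall>u\<in>V. \<forall>v\<in>V. u \<noteq> v \<longrightarrow> ({u, v} \<in> E \<longleftrightarrow> I u \<inter> I v \<noteq> {}))"

definition interval_graph :: "'a set \<Rightarrow> 'a set set \<Rightarrow> bool" where
  "interval_graph V E \<longleftrightarrow> simple_graph V E \<and>
     (\<exists>l r :: 'a \<Rightarrow> real. (\<forall>v\<in>V. l v \<le> r v) \<and>
        is_intersection_graph V E (\<lambda>v. {l v..r v}))"

definition proper_interval_graph :: "'a set \<Rightarrow> 'a set set \<Rightarrow> bool" where
  "proper_interval_graph V E \<longleftrightarrow> simple_graph V E \<and>
     (\<exists>l r :: 'a \<Rightarrow> real. (\<forall>v\<in>V. l v \<le> r v) \<and>
        is_intersection_graph V E (\<lambda>v. {l v..r v}) \<and>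
        (\<forall>u\<in>V. \<forall>v\<in>V. \<not> ({l u..r u} \<subset> {l v..r v})))"

definition interval_hypergraph :: "nat \<Rightarrow> 'a set \<Rightarrow> ('a \<Rightarrow> nat set) \<Rightarrow> bool" where
  "interval_hypergraph n V I \<longleftrightarrow>
     (\<forall>v\<in>V. \<exists>a b. 1 \<le> a \<and> a \<le> b \<and> b \<le> n \<and> I v = {a..b})"

definition exactly_hittable :: "nat \<Rightarrow> 'a set \<Rightarrow> ('a \<Rightarrow> nat set) \<Rightarrow> bool" where
  "exactly_hittable n V I \<longleftrightarrow>
     (\<exists>T. T \<subseteq> {1..n} \<and> (\<forall>v\<in>V. card (T \<inter> I v) = 1))"

definition exactly_hittable_interval_graph :: "'a set \<Rightarrow> 'a set set \<Rightarrow> bool" where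
  "exactly_hittable_interval_graph V E \<longleftrightarrow> interval_graph V E \<and>
     (\<exists>n I. interval_hypergraph n V I \<and> exactly_hittable n V I \<and>
        is_intersection_graph V E I)"

end

theory Submission
  imports Defs
begin

text \<open>For a proper family of intervals, repeatedly take the smallest right endpoint p: every
  interval starting at or before p contains p, and no right endpoint chosen later for the
  intervals starting after p can lie in such an interval without being properly nested in it.
  Replacing each endpoint by its rank turns the real intervals into an exactly hittable
  interval hypergraph on [n] with the same intersection graph.
  For strictness, take the stars K_{1,k}: at most two pairwise disjoint intervals can meet the
  center interval without lying inside it, since each must contain one of its two endpoints.
  So in K_{1,3} some leaf lies inside the center, which a proper representation forces to be
  equal to it; and in K_{1,4} two disjoint leaves lie inside the center, so the center is hit
  twice.\<close>

lemma Icc_Int_Icc_nonempty_iff: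
  fixes a b c d :: "'a::linorder"
  shows "{a..b} \<inter> {c..d} \<noteq> {} \<longleftrightarrow> a \<le> b \<and> c \<le> d \<and> a \<le> d \<and> c \<le> b"
  by auto

lemma Icc_meets_not_subset_contains_endpoint:
  fixes a b c d :: "'a::linorder"
  assumes "{c..d} \<inter> {a..b} \<noteq> {}" "\<not> {c..d} \<subseteq> {a..b}"
  shows "a \<in> {c..d} \<or> b \<in> {c..d}"
  using assms by auto

lemma card_disjoint_Icc_sticking_out_le_2:
  fixes c d :: "'i \<Rightarrow> 'a::linorder"
  assumes meets: "\<forall>i\<in>L. {c i..d i} \<inter> {a..b} \<noteq> {}"
    and disj: "\<forall>i\<in>L. \<forall>j\<in>L. i \<noteq> j \<longrightarrow> {c i..d i} \<inter> {c j..d j} = {}"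
  shows "card {i\<in>L. \<not> {c i..d i} \<subseteq> {a..b}} \<le> 2"
proof -
  define N where "N = {i\<in>L. \<not> {c i..d i} \<subseteq> {a..b}}"
  define e where "e i = (if a \<in> {c i..d i} then a else b)" for i
  have e_mem: "e i \<in> {c i..d i}" if "i \<in> N" for i
  proof -
    have "a \<in> {c i..d i} \<or> b \<in> {c i..d i}"
      using that meets by (intro Icc_meets_not_subset_contains_endpoint) (auto simp: N_def)
    then show ?thesis
      unfolding e_def by presburger
  qed
  have "inj_on e N"
  proof (rule inj_onI)
    fix i j assume "i \<in> N" "j \<in> N" "e i = e j"
    then have "{c i..d i} \<inter> {c j..d j} \<noteq> {}"
      using e_mem by (metis disjoint_iff)
    with \<open>i \<in> N\<close> \<open>j \<in> N\<close> disj show "i = j"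
      unfolding N_def by blast
  qed
  moreover have "e ` N \<subseteq> {a, b}"
    unfolding e_def by auto
  ultimately have "card N \<le> card {a, b}"
    by (rule card_inj_on_le) simp
  also have "\<dots> \<le> 2"
    by (simp add: card_insert_if)
  finally show ?thesis
    unfolding N_def .
qed

lemma card_Int_ge_2_if_meets_disjoint_subsets:
  assumes "finite C" "A \<subseteq> C" "B \<subseteq> C" "A \<inter> B = {}" "T \<inter> A \<noteq> {}" "T \<inter> B \<noteq> {}"
  shows "2 \<le> card (T \<inter> C)"
proof -
  obtain s t where "s \<in> T \<inter> A" "t \<in> T \<inter> B"
    using assms(5,6) by blast
  with assms(2-4) have "s \<noteq> t" "{s, t} \<subseteq> T \<inter> C"
    by auto
  then have "card {s, t} \<le> card (T \<inter> C)"
    using assms(1) by (intro card_mono) auto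
  with \<open>s \<noteq> t\<close> show ?thesis
    by simp
qed

lemma proper_Icc_family_exactly_hittable:
  fixes l r :: "'i \<Rightarrow> 'a::linorder"
  assumes "finite V" "\<forall>v\<in>V. l v \<le> r v"
    and "\<forall>u\<in>V. \<forall>v\<in>V. \<not> {l u..r u} \<subset> {l v..r v}"
  shows "\<exists>T \<subseteq> r ` V. \<forall>v\<in>V. card (T \<inter> {l v..r v}) = 1"
  using assms
proof (induction V rule: finite_psubset_induct)
  case (psubset V)
  show ?case
  proof (cases "V = {}")
    case True
    then show ?thesis by auto
  next
    case False
    define p where "p = Min (r ` V)"
    have "p \<in> r ` V"
      using False psubset.hyps unfolding p_def by (intro Min_in) auto
    then obtain w where w: "w \<in> V" "r w = p" by auto
    have p_le: "p \<le> r v" if "v \<in> V" for v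
      using psubset.hyps that unfolding p_def by simp
    define V' where "V' = {v\<in>V. p < l v}"
    have "V' \<subset> V"
      using w psubset.prems(1) unfolding V'_def by force
    then obtain T' where T': "T' \<subseteq> r ` V'" "\<forall>v\<in>V'. card (T' \<inter> {l v..r v}) = 1"
      using psubset.IH[of V'] psubset.prems unfolding V'_def by auto
    have "card (insert p T' \<inter> {l v..r v}) = 1" if v: "v \<in> V" for v
    proof (cases "p < l v")
      case True
      then have "insert p T' \<inter> {l v..r v} = T' \<inter> {l v..r v}" by auto
      with True v T'(2) show ?thesis unfolding V'_def by simp
    next
      case False
      \<comment> \<open>a point of T' in [l v, r v] is the right end of an interval properly inside it\<close>
      have "T' \<inter> {l v..r v} = {}"
      proof (rule ccontr)
        assume "T' \<inter> {l v..r v} \<noteq> {}"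
        then obtain u where u: "u \<in> V'" "r u \<in> {l v..r v}"
          using T'(1) by blast
        then have "{l u..r u} \<subset> {l v..r v}"
          using False psubset.prems(1) unfolding V'_def by fastforce
        with u v psubset.prems(2) show False
          unfolding V'_def by blast
      qed
      then have "insert p T' \<inter> {l v..r v} = {p}"
        using False p_le[OF v] by auto
      then show ?thesis by simp
    qed
    moreover have "insert p T' \<subseteq> r ` V"
      using w T'(1) \<open>V' \<subset> V\<close> by auto
    ultimately show ?thesis by blast
  qed
qed

lemma finite_strict_mono_on_into_nat:
  fixes S :: "'a::linorder set"
  assumes "finite S"
  obtains f :: "'a \<Rightarrow> nat" where "strict_mono_on S f" "f ` S \<subseteq> {1..card S}"
proof
  define f where "f x = card {z\<in>S. z \<le> x}" for x
  show "strict_mono_on S f"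
  proof (rule strict_mono_onI)
    fix x y assume "x \<in> S" "y \<in> S" "x < y"
    then have "{z\<in>S. z \<le> x} \<subseteq> {z\<in>S. z \<le> y}" "y \<in> {z\<in>S. z \<le> y} - {z\<in>S. z \<le> x}"
      using \<open>y \<in> S\<close> by auto
    then have "{z\<in>S. z \<le> x} \<subset> {z\<in>S. z \<le> y}"
      by blast
    then show "f x < f y"
      unfolding f_def using assms by (intro psubset_card_mono) auto
  qed
  show "f ` S \<subseteq> {1..card S}"
  proof
    fix n assume "n \<in> f ` S"
    then obtain x where "x \<in> S" "n = f x" by blast
    moreover have "{z\<in>S. z \<le> x} \<noteq> {}" "{z\<in>S. z \<le> x} \<subseteq> S"
      using \<open>x \<in> S\<close> by auto
    ultimately show "n \<in> {1..card S}"
      unfolding f_def using assms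
      by (auto simp: Suc_le_eq card_gt_0_iff card_mono intro: finite_subset)
  qed
qed

lemma strict_mono_on_image_Int_Icc:
  fixes f :: "'a::linorder \<Rightarrow> 'b::linorder"
  assumes "strict_mono_on S f" "T \<subseteq> S" "a \<in> S" "b \<in> S"
  shows "f ` T \<inter> {f a..f b} = f ` (T \<inter> {a..b})"
  using assms strict_mono_on_less_eq[OF assms(1)] by auto

lemma strict_mono_on_Icc_Int_Icc_nonempty_iff:
  fixes f :: "'a::linorder \<Rightarrow> 'b::linorder"
  assumes "strict_mono_on S f" "a \<in> S" "b \<in> S" "c \<in> S" "d \<in> S"
  shows "{f a..f b} \<inter> {f c..f d} \<noteq> {} \<longleftrightarrow> {a..b} \<inter> {c..d} \<noteq> {}"
  using assms by (simp only: Icc_Int_Icc_nonempty_iff strict_mono_on_less_eq)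

lemma proper_interval_graph_imp_exactly_hittable:
  assumes "proper_interval_graph V E"
  shows "exactly_hittable_interval_graph V E"
proof -
  obtain l r :: "'a \<Rightarrow> real" where sg: "simple_graph V E" and lr: "\<forall>v\<in>V. l v \<le> r v"
    and ig: "is_intersection_graph V E (\<lambda>v. {l v..r v})"
    and proper: "\<forall>u\<in>V. \<forall>v\<in>V. \<not> {l u..r u} \<subset> {l v..r v}"
    using assms unfolding proper_interval_graph_def by blast
  have "finite V"
    using sg unfolding simple_graph_def by blast
  then obtain T where T: "T \<subseteq> r ` V" "\<forall>v\<in>V. card (T \<inter> {l v..r v}) = 1"
    using proper_Icc_family_exactly_hittable[OF _ lr proper] by blast
  define S where "S = l ` V \<union> r ` V"
  have "finite S"
    using \<open>finite V\<close> unfolding S_def by blast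
  then obtain f :: "real \<Rightarrow> nat" where
    mono: "strict_mono_on S f" and f_S: "f ` S \<subseteq> {1..card S}"
    by (rule finite_strict_mono_on_into_nat)
  define I where "I v = {f (l v)..f (r v)}" for v
  have ends: "l v \<in> S" "r v \<in> S" if "v \<in> V" for v
    using that unfolding S_def by auto
  have "T \<subseteq> S"
    using T(1) unfolding S_def by blast
  have "interval_hypergraph (card S) V I"
    unfolding interval_hypergraph_def
  proof
    fix v assume "v \<in> V"
    then have "f (l v) \<in> {1..card S}" "f (r v) \<in> {1..card S}" "f (l v) \<le> f (r v)"
      using ends[OF \<open>v \<in> V\<close>] f_S lr \<open>v \<in> V\<close> by (auto intro: strict_mono_on_leD[OF mono])
    then show "\<exists>a b. 1 \<le> a \<and> a \<le> b \<and> b \<le> card S \<and> I v = {a..b}"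
      unfolding I_def by auto
  qed
  moreover have "exactly_hittable (card S) V I"
    unfolding exactly_hittable_def
  proof (intro exI conjI ballI)
    show "f ` T \<subseteq> {1..card S}"
      using f_S \<open>T \<subseteq> S\<close> by blast
    fix v assume "v \<in> V"
    have "f ` T \<inter> I v = f ` (T \<inter> {l v..r v})"
      unfolding I_def using mono \<open>T \<subseteq> S\<close> ends[OF \<open>v \<in> V\<close>]
      by (rule strict_mono_on_image_Int_Icc)
    also have "card \<dots> = card (T \<inter> {l v..r v})"
      using strict_mono_on_imp_inj_on[OF mono] \<open>T \<subseteq> S\<close> by (intro card_image) (auto intro: inj_on_subset)
    finally show "card (f ` T \<inter> I v) = 1"
      using T(2) \<open>v \<in> V\<close> by simp
  qed
  moreover have "is_intersection_graph V E I"
    unfolding is_intersection_graph_def I_def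
  proof (intro ballI impI)
    fix u v assume "u \<in> V" "v \<in> V" "u \<noteq> v"
    have "{f (l u)..f (r u)} \<inter> {f (l v)..f (r v)} \<noteq> {} \<longleftrightarrow> {l u..r u} \<inter> {l v..r v} \<noteq> {}"
      using \<open>u \<in> V\<close> \<open>v \<in> V\<close> by (intro strict_mono_on_Icc_Int_Icc_nonempty_iff[OF mono] ends)
    with ig \<open>u \<in> V\<close> \<open>v \<in> V\<close> \<open>u \<noteq> v\<close>
    show "{u, v} \<in> E \<longleftrightarrow> {f (l u)..f (r u)} \<inter> {f (l v)..f (r v)} \<noteq> {}"
      unfolding is_intersection_graph_def by blast
  qed
  moreover have "interval_graph V E"
    using sg lr ig unfolding interval_graph_def by blast
  ultimately show ?thesis
    unfolding exactly_hittable_interval_graph_def by blast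
qed

definition star_vertices :: "nat \<Rightarrow> nat set" where
  "star_vertices k = {0..k}"

definition star_edges :: "nat \<Rightarrow> nat set set" where
  "star_edges k = (\<lambda>i. {0, i}) ` {1..k}"

lemma simple_graph_star: "simple_graph (star_vertices k) (star_edges k)"
  unfolding simple_graph_def star_vertices_def star_edges_def by fastforce

lemma doubleton_in_star_edges_iff:
  "{u, v} \<in> star_edges k \<longleftrightarrow> u = 0 \<and> v \<in> {1..k} \<or> v = 0 \<and> u \<in> {1..k}"
  unfolding star_edges_def by (auto simp: doubleton_eq_iff)

lemma is_intersection_graph_star_iff:
  "is_intersection_graph (star_vertices k) (star_edges k) I \<longleftrightarrow>
     (\<forall>i\<in>{1..k}. I 0 \<inter> I i \<noteq> {}) \<and>
     (\<forall>i\<in>{1..k}. \<forall>j\<in>{1..k}. i \<noteq> j \<longrightarrow> I i \<inter> I j = {})"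
  (is "?graph \<longleftrightarrow> ?meet \<and> ?disj")
proof
  assume ?graph
  then have "{u, v} \<in> star_edges k \<longleftrightarrow> I u \<inter> I v \<noteq> {}" if "u \<in> {0..k}" "v \<in> {0..k}" "u \<noteq> v" for u v
    using that unfolding is_intersection_graph_def star_vertices_def by blast
  then show "?meet \<and> ?disj"
    unfolding doubleton_in_star_edges_iff by (metis atLeastAtMost_iff le0 not_one_le_zero)
next
  assume "?meet \<and> ?disj"
  then show ?graph
    unfolding is_intersection_graph_def star_vertices_def doubleton_in_star_edges_iff
    by (metis Int_commute atLeastAtMost_iff le_0_eq not_less_eq_eq One_nat_def)
qed

lemma interval_graph_star: "interval_graph (star_vertices k) (star_edges k)"
  unfolding interval_graph_def
proof (intro conjI exI)
  show "simple_graph (star_vertices k) (star_edges k)"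
    by (rule simple_graph_star)
  define l r :: "nat \<Rightarrow> real"
    where "l v = (if v = 0 then 0 else real v)" and "r v = (if v = 0 then real k else real v)" for v
  show "\<forall>v\<in>star_vertices k. l v \<le> r v"
    unfolding l_def r_def star_vertices_def by auto
  show "is_intersection_graph (star_vertices k) (star_edges k) (\<lambda>v. {l v..r v})"
    unfolding is_intersection_graph_star_iff l_def r_def by auto
qed

lemma star_Icc_leaves_inside_center:
  fixes c d :: "nat \<Rightarrow> 'a::linorder"
  assumes "is_intersection_graph (star_vertices k) (star_edges k) (\<lambda>v. {c v..d v})"
  shows "k \<le> card {i\<in>{1..k}. {c i..d i} \<subseteq> {c 0..d 0}} + 2"
proof -
  have "card {i\<in>{1..k}. \<not> {c i..d i} \<subseteq> {c 0..d 0}} \<le> 2"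
    using assms unfolding is_intersection_graph_star_iff
    by (intro card_disjoint_Icc_sticking_out_le_2) (auto simp: Int_commute)
  moreover have "card {i\<in>{1..k}. {c i..d i} \<subseteq> {c 0..d 0}} + card {i\<in>{1..k}. \<not> {c i..d i} \<subseteq> {c 0..d 0}} = k"
  proof -
    have "{i\<in>{1..k}. {c i..d i} \<subseteq> {c 0..d 0}} \<union> {i\<in>{1..k}. \<not> {c i..d i} \<subseteq> {c 0..d 0}} = {1..k}"
      by blast
    then show ?thesis
      by (subst card_Un_disjoint[symmetric]) auto
  qed
  ultimately show ?thesis
    by linarith
qed

lemma exactly_hittable_interval_graph_claw:
  "exactly_hittable_interval_graph (star_vertices 3) (star_edges 3)"
proof -
  define a b :: "nat \<Rightarrow> nat" where "a v = [2, 1, 3, 4] ! v" and "b v = [4, 2, 3, 5] ! v" for v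
  define I where "I v = {a v..b v}" for v
  have vertices: "star_vertices 3 = {0, 1, 2, 3}" and leaves: "{1..3::nat} = {1, 2, 3}"
    unfolding star_vertices_def by auto
  have "interval_hypergraph 5 (star_vertices 3) I"
    unfolding interval_hypergraph_def I_def
  proof (intro ballI exI conjI)
    fix v assume "v \<in> star_vertices 3"
    then show "1 \<le> a v" "a v \<le> b v" "b v \<le> 5"
      unfolding vertices a_def b_def by auto
  qed rule
  moreover have "exactly_hittable 5 (star_vertices 3) I"
    unfolding exactly_hittable_def
  proof (intro exI[of _ "{1, 3, 5}"] conjI)
    have "{1::nat, 3, 5} \<inter> {2..4} = {3}" "{1::nat, 3, 5} \<inter> {1..2} = {1}"
      "{1::nat, 3, 5} \<inter> {3..3} = {3}" "{1::nat, 3, 5} \<inter> {4..5} = {5}"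
      by auto
    then show "\<forall>v\<in>star_vertices 3. card ({1, 3, 5} \<inter> I v) = 1"
      unfolding vertices I_def a_def b_def by simp
  qed auto
  moreover have "is_intersection_graph (star_vertices 3) (star_edges 3) I"
    unfolding is_intersection_graph_star_iff leaves I_def a_def b_def by auto
  ultimately show ?thesis
    unfolding exactly_hittable_interval_graph_def using interval_graph_star by blast
qed

lemma not_proper_interval_graph_claw:
  "\<not> proper_interval_graph (star_vertices 3) (star_edges 3)"
proof
  assume "proper_interval_graph (star_vertices 3) (star_edges 3)"
  then obtain c d :: "nat \<Rightarrow> real"
    where ig: "is_intersection_graph (star_vertices 3) (star_edges 3) (\<lambda>v. {c v..d v})"
      and proper: "\<forall>u\<in>star_vertices 3. \<forall>v\<in>star_vertices 3. \<not> {c u..d u} \<subset> {c v..d v}"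
    unfolding proper_interval_graph_def by blast
  define inside where "inside = {i\<in>{1..3}. {c i..d i} \<subseteq> {c 0..d 0}}"
  have "inside \<noteq> {}"
    using star_Icc_leaves_inside_center[OF ig] unfolding inside_def[symmetric] by (intro notI) simp
  then obtain w where w: "w \<in> {1..3}" "{c w..d w} \<subseteq> {c 0..d 0}"
    unfolding inside_def by blast
  moreover have "w \<in> star_vertices 3" "0 \<in> star_vertices 3"
    using w(1) unfolding star_vertices_def by auto
  ultimately have center_eq: "{c w..d w} = {c 0..d 0}"
    using proper by blast
  \<comment> \<open>any other leaf must meet the center, which is leaf w\<close>
  obtain y :: nat where "y \<in> {1..3}" "y \<noteq> w"
    using that[of "if w = 1 then 2 else 1"] by auto
  with w(1) ig center_eq show False
    unfolding is_intersection_graph_star_iff by (metis Int_commute)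
qed

lemma not_exactly_hittable_interval_graph_star4:
  "\<not> exactly_hittable_interval_graph (star_vertices 4) (star_edges 4)"
proof
  assume "exactly_hittable_interval_graph (star_vertices 4) (star_edges 4)"
  then obtain n I where ih: "interval_hypergraph n (star_vertices 4) I"
    and hittable: "\<exists>T. \<forall>v\<in>star_vertices 4. card (T \<inter> I v) = 1"
    and ig: "is_intersection_graph (star_vertices 4) (star_edges 4) I"
    unfolding exactly_hittable_interval_graph_def exactly_hittable_def by blast
  obtain c d where I: "\<forall>v\<in>star_vertices 4. I v = {c v..d v}"
    using ih unfolding interval_hypergraph_def by metis
  obtain T where T: "\<forall>v\<in>star_vertices 4. card (T \<inter> I v) = 1"
    using hittable by blast
  have ig': "is_intersection_graph (star_vertices 4) (star_edges 4) (\<lambda>v. {c v..d v})"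
    using ig I unfolding is_intersection_graph_def by simp
  define inside where "inside = {i\<in>{1..4}. {c i..d i} \<subseteq> {c 0..d 0}}"
  have "2 \<le> card inside"
    using star_Icc_leaves_inside_center[OF ig'] unfolding inside_def[symmetric] by simp
  then obtain i j where "i \<in> inside" "j \<in> inside" "i \<noteq> j"
    by (metis card_2_iff' card_le_Suc_iff numeral_2_eq_2 insert_iff)
  then have ij: "i \<in> {1..4}" "j \<in> {1..4}" "I i \<subseteq> I 0" "I j \<subseteq> I 0"
    using I unfolding inside_def star_vertices_def by auto
  have "2 \<le> card (T \<inter> I 0)"
  proof (rule card_Int_ge_2_if_meets_disjoint_subsets)
    show "finite (I 0)"
      using I unfolding star_vertices_def by simp
    show "I i \<inter> I j = {}"
      using ig ij \<open>i \<noteq> j\<close> unfolding is_intersection_graph_star_iff by blast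
    show "T \<inter> I i \<noteq> {}" "T \<inter> I j \<noteq> {}"
      using T ij unfolding star_vertices_def by (metis atLeastAtMost_iff card.empty le0 order.trans zero_neq_one)+
  qed (use ij in blast)+
  moreover have "card (T \<inter> I 0) = 1"
    using T unfolding star_vertices_def by simp
  ultimately show False by simp
qed

theorem theorem6:
  shows "(\<forall>(V :: 'a set) E. proper_interval_graph V E \<longrightarrow> exactly_hittable_interval_graph V E)
       \<and> (\<forall>(V :: 'a set) E. exactly_hittable_interval_graph V E \<longrightarrow> interval_graph V E)
       \<and> (\<exists>(V :: nat set) E. exactly_hittable_interval_graph V E \<and> \<not> proper_interval_graph V E)
       \<and> (\<exists>(V :: nat set) E. interval_graph V E \<and> \<not> exactly_hittable_interval_graph V E)"
proof (intro conjI allI impI exI)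
  show "exactly_hittable_interval_graph V E" if "proper_interval_graph V E" for V :: "'a set" and E
    using that by (rule proper_interval_graph_imp_exactly_hittable)
  show "interval_graph V E" if "exactly_hittable_interval_graph V E" for V :: "'a set" and E
    using that unfolding exactly_hittable_interval_graph_def by blast
  show "exactly_hittable_interval_graph (star_vertices 3) (star_edges 3)"
    by (rule exactly_hittable_interval_graph_claw)
  show "\<not> proper_interval_graph (star_vertices 3) (star_edges 3)"
    by (rule not_proper_interval_graph_claw)
  show "interval_graph (star_vertices 4) (star_edges 4)"
    by (rule interval_graph_star)
  show "\<not> exactly_hittable_interval_graph (star_vertices 4) (star_edges 4)"
    by (rule not_exactly_hittable_interval_graph_star4)
qed

end
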